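(* Let $j\ge1$ be an integer, $s\in\mathbb{R}$ and $T>0$. Let $a_{l_1,l_2}\in\mathbb{C}$ for integers $0\le l_1\le l_2\le 2j$, and suppose there exists an integer $k>j$ with $a_{0,k}\neq0$. Then there does not exist any normed space $X_T$ of functions on $\mathbb{R}\times[-T,T]$ satisfying all three of the following: (i) $X_T$ is continuously embedded in $C([-T,T];H^s(\mathbb{R}))$, i.e. $\|u\|_{C([-T,T];H^s)}\lesssim\|u\|_{X_T}$ for all $u\in X_T$; (ii) $\|U_j(t)\phi\|_{X_T}\lesssim\|\phi\|_{H^s}$ for all $\phi\in H^s(\mathbb{R})$; (iii) for all $u,v\in X_T$, $$\Big\|\int_0^tU_j(t-t')\sum_{0\le l_1\le l_2\le2j}a_{l_1,l_2}\,\partial_x^{l_1}u(t')\,\partial_x^{l_2}v(t')\,dt'\Big\|_{X_T}\lesssim\|u\|_{X_T}\|v\|_{X_T}.$$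
   Context: $U_j(t)$ is the unitary group on $H^s(\mathbb{R})$ given by $\widehat{U_j(t)\phi}(\xi)=e^{(-1)^{j+1}i\xi^{2j+1}t}\widehat\phi(\xi)$ (the free evolution of $\partial_tu+\partial_x^{2j+1}u=0$). $H^s(\mathbb{R})$ is the Sobolev space with norm $\|(1+\xi^2)^{s/2}\widehat f\|_{L^2}$. The conclusion also holds if all functions are required to be real-valued. *)

theory Defs
  imports "HOL-Analysis.Analysis"
begin

text \<open>Everything is expressed on the Fourier side (in the space variable x):
  an element of H^s is represented by its Fourier transform g = phi-hat,
  with phi-hat(xi) = integral of phi(x) exp(-i x xi) dx.
  A function u(t,x) on [-T,T] x R is represented by w t xi = (u(t))-hat(xi).\<close>

definition in_Hs :: "real \<Rightarrow> (real \<Rightarrow> complex) \<Rightarrow> bool" where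
  "in_Hs s g \<longleftrightarrow> g \<in> borel_measurable lborel \<and>
     integrable lborel (\<lambda>\<xi>. (1 + \<xi>\<^sup>2) powr s * (cmod (g \<xi>))\<^sup>2)"

definition Hs_norm :: "real \<Rightarrow> (real \<Rightarrow> complex) \<Rightarrow> real" where
  "Hs_norm s g = sqrt (\<integral>\<xi>. (1 + \<xi>\<^sup>2) powr s * (cmod (g \<xi>))\<^sup>2 \<partial>lborel)"

text \<open>Fourier multiplier of U_j(t): exp((-1)^(j+1) i xi^(2j+1) t).\<close>
definition disp :: "nat \<Rightarrow> real \<Rightarrow> real \<Rightarrow> complex" where
  "disp j \<xi> t = exp (\<i> * complex_of_real ((-1) ^ (j + 1) * \<xi> ^ (2 * j + 1) * t))"

text \<open>(t,xi) |-> (U_j(t) phi)-hat(xi) on [-T,T] (extended by 0 outside).\<close>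
definition free_evol :: "nat \<Rightarrow> real \<Rightarrow> (real \<Rightarrow> complex) \<Rightarrow> real \<Rightarrow> real \<Rightarrow> complex" where
  "free_evol j T g = (\<lambda>t \<xi>. if t \<in> {-T..T} then disp j \<xi> t * g \<xi> else 0)"

text \<open>Fourier transform at time t of sum a_{l1,l2} d_x^l1 u d_x^l2 v,
  using (fg)-hat = (1/(2 pi)) f-hat * g-hat and (d_x^l f)-hat = (i xi)^l f-hat.\<close>
definition nonlin_hat :: "nat \<Rightarrow> (nat \<Rightarrow> nat \<Rightarrow> complex) \<Rightarrow> (real \<Rightarrow> real \<Rightarrow> complex)
    \<Rightarrow> (real \<Rightarrow> real \<Rightarrow> complex) \<Rightarrow> real \<Rightarrow> real \<Rightarrow> complex" where
  "nonlin_hat j a u v t \<xi> =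
     (\<Sum>l2\<in>{0..2*j}. \<Sum>l1\<in>{0..l2}. a l1 l2 * complex_of_real (1 / (2 * pi)) *
        (\<integral>\<eta>. (\<i> * complex_of_real \<eta>) ^ l1 * u t \<eta> *
               (\<i> * complex_of_real (\<xi> - \<eta>)) ^ l2 * v t (\<xi> - \<eta>) \<partial>lborel))"

text \<open>Fourier transform of the Duhamel term int_0^t U_j(t-t') F(t') dt' on [-T,T]
  (oriented integral: negative orientation for t < 0).\<close>
definition duhamel :: "nat \<Rightarrow> real \<Rightarrow> (nat \<Rightarrow> nat \<Rightarrow> complex) \<Rightarrow> (real \<Rightarrow> real \<Rightarrow> complex)
    \<Rightarrow> (real \<Rightarrow> real \<Rightarrow> complex) \<Rightarrow> real \<Rightarrow> real \<Rightarrow> complex" where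
  "duhamel j T a u v = (\<lambda>t \<xi>. if t \<in> {-T..T} then
      interval_lebesgue_integral lborel (ereal 0) (ereal t)
        (\<lambda>t'. disp j \<xi> (t - t') * nonlin_hat j a u v t' \<xi>)
    else 0)"

definition seminormed_fun_space :: "(real \<Rightarrow> real \<Rightarrow> complex) set \<Rightarrow> ((real \<Rightarrow> real \<Rightarrow> complex) \<Rightarrow> real) \<Rightarrow> bool" where
  "seminormed_fun_space X N \<longleftrightarrow>
     (\<lambda>t \<xi>. 0) \<in> X \<and>
     (\<forall>u\<in>X. \<forall>v\<in>X. (\<lambda>t \<xi>. u t \<xi> + v t \<xi>) \<in> X) \<and>
     (\<forall>c. \<forall>u\<in>X. (\<lambda>t \<xi>. c * u t \<xi>) \<in> X) \<and>
     (\<forall>u\<in>X. N u \<ge> 0) \<and>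
     (\<forall>c. \<forall>u\<in>X. N (\<lambda>t \<xi>. c * u t \<xi>) = cmod c * N u) \<and>
     (\<forall>u\<in>X. \<forall>v\<in>X. N (\<lambda>t \<xi>. u t \<xi> + v t \<xi>) \<le> N u + N v)"

definition in_C_Hs :: "real \<Rightarrow> real \<Rightarrow> (real \<Rightarrow> real \<Rightarrow> complex) \<Rightarrow> bool" where
  "in_C_Hs s T u \<longleftrightarrow> (\<forall>t\<in>{-T..T}. in_Hs s (u t)) \<and>
     (\<forall>t0\<in>{-T..T}. ((\<lambda>t. Hs_norm s (\<lambda>\<xi>. u t \<xi> - u t0 \<xi>)) \<longlongrightarrow> 0) (at t0 within {-T..T}))"

definition C_Hs_norm :: "real \<Rightarrow> real \<Rightarrow> (real \<Rightarrow> real \<Rightarrow> complex) \<Rightarrow> real" where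
  "C_Hs_norm s T u = (SUP t\<in>{-T..T}. Hs_norm s (u t))"

end

theory Submission
  imports Defs
begin

text \<open>
  Idea (high--low interaction): chaining the three hypotheses on $X_T$ gives a bilinear
  bound $\|D(T)\|_{H^s} \le M\,\|g_1\|_{H^s}\|g_2\|_{H^s}$ for the Duhamel term $D$ of the
  free evolutions of $g_1, g_2$.  Test it with $\hat g_1 = \mathbf 1_{[0,\delta]}$ and
  $\hat g_2 = \mathbf 1_{[N,N+1]}$, where $K$ is the largest order with $a_{0,K} \ne 0$ and
  $\delta \sim T^{-1}N^{-2j}$.  For $N+\delta \le \xi \le N+1$ the resonance phase stays
  below one and the symbol is dominated by $a_{0,K}(i\zeta)^K$, so the integrand is
  coherent and $|\hat D(T,\xi)| \gtrsim T\delta N^K$.  Hence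
  $\|D(T)\|^2 \gtrsim (1+N^2)^s\,\delta^2 N^{2K}$ while
  $\|g_1\|^2\|g_2\|^2 \lesssim \delta\,(1+N^2)^s$, i.e. $\delta N^{2K} \sim N^{2K-2j} \gtrsim N^2$
  is bounded, which fails for large $N$.
\<close>

lemma cos_ge_half:
  fixes \<theta> :: real assumes "\<bar>\<theta>\<bar> \<le> 1" shows "cos \<theta> \<ge> 1/2"
proof -
  have "cos (pi/3) \<le> cos \<bar>\<theta>\<bar>"
    using assms pi_gt3 by (subst cos_mono_le_eq) auto
  then show ?thesis by (simp add: cos_60)
qed

lemma power_Suc_increment_le:
  fixes z e :: real assumes "0 \<le> z" "0 \<le> e"
  shows "(z + e) ^ Suc m \<le> z ^ Suc m + real (Suc m) * e * (z + e) ^ m"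
proof (induction m)
  case 0 then show ?case by simp
next
  case (Suc m)
  have "(z + e) ^ Suc (Suc m) = (z + e) * (z + e) ^ Suc m" by simp
  also have "\<dots> \<le> (z + e) * (z ^ Suc m + real (Suc m) * e * (z + e) ^ m)"
    using Suc assms by (intro mult_left_mono) auto
  also have "\<dots> = z ^ Suc (Suc m) + e * z ^ Suc m + real (Suc m) * e * (z + e) ^ Suc m"
    by (simp add: algebra_simps)
  also have "e * z ^ Suc m \<le> e * (z + e) ^ Suc m"
    using assms by (intro mult_left_mono power_mono) auto
  finally show ?case by (simp add: algebra_simps)
qed

lemma sobolev_weight_comparable:
  fixes N \<xi> s :: real assumes "0 \<le> N" "N \<le> \<xi>" "\<xi> \<le> N + 1"
  shows "(1 + \<xi>\<^sup>2) powr s \<le> (1 + N\<^sup>2) powr s * 4 powr \<bar>s\<bar>"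
    and "(1 + N\<^sup>2) powr s * 4 powr (-\<bar>s\<bar>) \<le> (1 + \<xi>\<^sup>2) powr s"
proof -
  define r where "r = (1 + \<xi>\<^sup>2) / (1 + N\<^sup>2)"
  have pos: "1 + N\<^sup>2 > 0" by (simp add: add_pos_nonneg)
  have "N\<^sup>2 \<le> \<xi>\<^sup>2" using assms by (intro power_mono) auto
  then have r1: "1 \<le> r" using pos by (simp add: r_def)
  have "\<xi>\<^sup>2 \<le> (N + 1)\<^sup>2" using assms by (intro power_mono) auto
  also have "\<dots> \<le> 3 + 3 * N\<^sup>2" using zero_le_power2[of "N - 1"] zero_le_power2[of N]
    by (simp add: power2_diff power2_sum) (smt (verit) zero_le_power2)
  finally have "1 + \<xi>\<^sup>2 \<le> 4 * (1 + N\<^sup>2)" unfolding distrib_left using zero_le_power2[of N] by linarith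
  then have r4: "r \<le> 4" using pos by (simp add: r_def divide_le_eq)
  have weight: "(1 + \<xi>\<^sup>2) powr s = (1 + N\<^sup>2) powr s * r powr s"
    using pos by (simp add: r_def powr_divide)
  have "r powr s \<le> 4 powr \<bar>s\<bar> \<and> 4 powr (-\<bar>s\<bar>) \<le> r powr s"
  proof (cases "s \<ge> 0")
    case True
    have "r powr s \<le> 4 powr s" using r1 r4 True by (intro powr_mono2) auto
    moreover have "1 \<le> r powr s" using r1 True by (simp add: ge_one_powr_ge_zero)
    moreover have "4 powr (-s) \<le> 1" using True by (simp add: powr_minus_divide ge_one_powr_ge_zero)
    ultimately show ?thesis using True by auto
  next
    case False
    have "4 powr s \<le> r powr s" using r1 r4 False by (intro powr_mono2') auto
    moreover have "r powr s \<le> 1" using r1 False by (metis less_eq_real_def not_le powr_one_eq_one powr_less_mono2_neg zero_less_one)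
    moreover have "1 \<le> 4 powr (-s)" using False by (simp add: ge_one_powr_ge_zero)
    ultimately show ?thesis using False by auto
  qed
  then show "(1 + \<xi>\<^sup>2) powr s \<le> (1 + N\<^sup>2) powr s * 4 powr \<bar>s\<bar>"
    and "(1 + N\<^sup>2) powr s * 4 powr (-\<bar>s\<bar>) \<le> (1 + \<xi>\<^sup>2) powr s"
    unfolding weight by (auto intro: mult_left_mono)
qed

lemma integrable_indicator_const:
  "integrable lborel (\<lambda>x. indicator {a::real..b} x * (c::real))"
  using emeasure_compact_finite[OF compact_Icc[of a b]]
  by (intro integrable_mult_left integrable_real_indicator) auto

lemma norm_integral_indicator_le:
  fixes f :: "real \<Rightarrow> complex"
  assumes "a \<le> b" and int: "integrable lborel (\<lambda>x. indicator {a..b} x *\<^sub>R f x)"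
    and bound: "\<And>x. x \<in> {a..b} \<Longrightarrow> cmod (f x) \<le> B"
  shows "cmod (\<integral>x. indicator {a..b} x *\<^sub>R f x \<partial>lborel) \<le> (b - a) * B"
proof -
  have "cmod (\<integral>x. indicator {a..b} x *\<^sub>R f x \<partial>lborel) \<le> (\<integral>x. indicator {a..b} x * B \<partial>lborel)"
  proof (rule Bochner_Integration.integral_norm_bound_integral[OF int integrable_indicator_const])
    show "norm (indicator {a..b} x *\<^sub>R f x) \<le> indicator {a..b} x * B" for x
      using bound[of x] by (cases "x \<in> {a..b}") auto
  qed
  then show ?thesis using assms(1) by simp
qed

lemma Re_integral_indicator_ge:
  fixes f :: "real \<Rightarrow> complex"
  assumes "a \<le> b" and int: "integrable lborel (\<lambda>x. indicator {a..b} x *\<^sub>R f x)"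
    and bound: "\<And>x. x \<in> {a..b} \<Longrightarrow> c \<le> Re (\<omega> * f x)"
  shows "(b - a) * c \<le> Re (\<omega> * (\<integral>x. indicator {a..b} x *\<^sub>R f x \<partial>lborel))"
proof -
  have int\<omega>: "integrable lborel (\<lambda>x. \<omega> * (indicator {a..b} x *\<^sub>R f x))"
    using int by (rule integrable_mult_right)
  have "(b - a) * c = (\<integral>x. indicator {a..b} x * c \<partial>lborel)" using assms(1) by simp
  also have "\<dots> \<le> (\<integral>x. Re (\<omega> * (indicator {a..b} x *\<^sub>R f x)) \<partial>lborel)"
  proof (rule integral_mono[OF integrable_indicator_const integrable_Re[OF int\<omega>]])
    show "indicator {a..b} x * c \<le> Re (\<omega> * (indicator {a..b} x *\<^sub>R f x))" for x
      using bound[of x] by (cases "x \<in> {a..b}") auto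
  qed
  also have "\<dots> = Re (\<omega> * (\<integral>x. indicator {a..b} x *\<^sub>R f x \<partial>lborel))"
    by (simp only: integral_Re[OF int\<omega>] integral_mult_right_zero)
  finally show ?thesis .
qed

lemma Hs_norm_nonneg: "Hs_norm s g \<ge> 0"
  unfolding Hs_norm_def by simp

lemma Hs_norm_sq: "(Hs_norm s g)\<^sup>2 = (\<integral>\<xi>. (1 + \<xi>\<^sup>2) powr s * (cmod (g \<xi>))\<^sup>2 \<partial>lborel)"
  unfolding Hs_norm_def by (subst real_sqrt_pow2) (auto intro!: integral_nonneg_AE)

lemma norm_add_sq_le:
  fixes x y :: "'a::real_normed_vector"
  shows "(norm (x + y))\<^sup>2 \<le> 2 * (norm x)\<^sup>2 + 2 * (norm y)\<^sup>2"
proof -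
  have "(norm (x + y))\<^sup>2 \<le> (norm x + norm y)\<^sup>2"
    by (intro power_mono norm_triangle_ineq) auto
  also have "\<dots> \<le> 2 * (norm x)\<^sup>2 + 2 * (norm y)\<^sup>2"
    using zero_le_power2[of "norm x - norm y"] by (simp add: power2_diff power2_sum)
  finally show ?thesis .
qed

lemma in_Hs_diff:
  assumes f: "in_Hs s f" and g: "in_Hs s g"
  shows "in_Hs s (\<lambda>\<xi>. f \<xi> - g \<xi>)"
proof -
  have [measurable]: "f \<in> borel_measurable lborel" "g \<in> borel_measurable lborel"
    using f g by (auto simp: in_Hs_def)
  have "integrable lborel (\<lambda>\<xi>. (1 + \<xi>\<^sup>2) powr s * (cmod (f \<xi> - g \<xi>))\<^sup>2)"
  proof (rule Bochner_Integration.integrable_bound)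
    show "integrable lborel (\<lambda>\<xi>. 2 * ((1 + \<xi>\<^sup>2) powr s * (cmod (f \<xi>))\<^sup>2)
        + 2 * ((1 + \<xi>\<^sup>2) powr s * (cmod (g \<xi>))\<^sup>2))"
      using f g by (auto simp: in_Hs_def)
    show "AE \<xi> in lborel. norm ((1 + \<xi>\<^sup>2) powr s * (cmod (f \<xi> - g \<xi>))\<^sup>2)
        \<le> norm (2 * ((1 + \<xi>\<^sup>2) powr s * (cmod (f \<xi>))\<^sup>2) + 2 * ((1 + \<xi>\<^sup>2) powr s * (cmod (g \<xi>))\<^sup>2))"
    proof (rule AE_I2)
      fix \<xi> :: real
      have "(1 + \<xi>\<^sup>2) powr s * (cmod (f \<xi> - g \<xi>))\<^sup>2
          \<le> (1 + \<xi>\<^sup>2) powr s * (2 * (cmod (f \<xi>))\<^sup>2 + 2 * (cmod (g \<xi>))\<^sup>2)"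
        using norm_add_sq_le[of "f \<xi>" "- g \<xi>"] by (intro mult_left_mono) auto
      then show "norm ((1 + \<xi>\<^sup>2) powr s * (cmod (f \<xi> - g \<xi>))\<^sup>2)
          \<le> norm (2 * ((1 + \<xi>\<^sup>2) powr s * (cmod (f \<xi>))\<^sup>2) + 2 * ((1 + \<xi>\<^sup>2) powr s * (cmod (g \<xi>))\<^sup>2))"
        by (simp add: algebra_simps)
    qed
  qed measurable
  then show ?thesis unfolding in_Hs_def by simp
qed

text \<open>Quasi-triangle inequality $\|f\|^2 \le 2\|f-g\|^2 + 2\|g\|^2$; it is all we need
  to turn continuity of $t \mapsto u(t)$ in $H^s$ into local boundedness of $\|u(t)\|$.\<close>
lemma Hs_norm_quasi_triangle:
  assumes f: "in_Hs s f" and g: "in_Hs s g"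
  shows "(Hs_norm s f)\<^sup>2 \<le> 2 * (Hs_norm s (\<lambda>\<xi>. f \<xi> - g \<xi>))\<^sup>2 + 2 * (Hs_norm s g)\<^sup>2"
proof -
  have ifg: "integrable lborel (\<lambda>\<xi>. (1 + \<xi>\<^sup>2) powr s * (cmod (f \<xi> - g \<xi>))\<^sup>2)"
    using in_Hs_diff[OF f g] by (simp add: in_Hs_def)
  have ig: "integrable lborel (\<lambda>\<xi>. (1 + \<xi>\<^sup>2) powr s * (cmod (g \<xi>))\<^sup>2)"
    using g by (simp add: in_Hs_def)
  have "(Hs_norm s f)\<^sup>2 \<le> (\<integral>\<xi>. 2 * ((1 + \<xi>\<^sup>2) powr s * (cmod (f \<xi> - g \<xi>))\<^sup>2)
      + 2 * ((1 + \<xi>\<^sup>2) powr s * (cmod (g \<xi>))\<^sup>2) \<partial>lborel)"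
    unfolding Hs_norm_sq
  proof (rule integral_mono)
    fix \<xi> :: real
    have "(1 + \<xi>\<^sup>2) powr s * (cmod (f \<xi>))\<^sup>2
        \<le> (1 + \<xi>\<^sup>2) powr s * (2 * (cmod (f \<xi> - g \<xi>))\<^sup>2 + 2 * (cmod (g \<xi>))\<^sup>2)"
      using norm_add_sq_le[of "f \<xi> - g \<xi>" "g \<xi>"] by (intro mult_left_mono) auto
    then show "(1 + \<xi>\<^sup>2) powr s * (cmod (f \<xi>))\<^sup>2 \<le> 2 * ((1 + \<xi>\<^sup>2) powr s * (cmod (f \<xi> - g \<xi>))\<^sup>2)
        + 2 * ((1 + \<xi>\<^sup>2) powr s * (cmod (g \<xi>))\<^sup>2)"
      by (simp add: algebra_simps)
  qed (use f ifg ig in \<open>auto simp: in_Hs_def\<close>)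
  also have "\<dots> = 2 * (Hs_norm s (\<lambda>\<xi>. f \<xi> - g \<xi>))\<^sup>2 + 2 * (Hs_norm s g)\<^sup>2"
    unfolding Hs_norm_sq using ifg ig by simp
  finally show ?thesis .
qed

lemma compact_locally_bdd_above:
  fixes f :: "'a::metric_space \<Rightarrow> real"
  assumes "compact S" and loc: "\<And>x. x \<in> S \<Longrightarrow> \<exists>d>0. \<forall>y\<in>S. dist y x < d \<longrightarrow> f y \<le> B x"
  shows "bdd_above (f ` S)"
proof -
  have "\<forall>x\<in>S. \<exists>d. d > 0 \<and> (\<forall>y\<in>S. dist y x < d \<longrightarrow> f y \<le> B x)"
    using loc by blast
  from bchoice[OF this] obtain d
    where d: "\<forall>x\<in>S. d x > 0 \<and> (\<forall>y\<in>S. dist y x < d x \<longrightarrow> f y \<le> B x)"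
    by blast
  have cover: "S \<subseteq> (\<Union>x\<in>S. ball x (d x))"
  proof
    fix x assume "x \<in> S"
    then show "x \<in> (\<Union>x\<in>S. ball x (d x))" using d by (intro UN_I[where a=x]) auto
  qed
  obtain S' where S': "S' \<subseteq> S" "finite S'" "S \<subseteq> (\<Union>x\<in>S'. ball x (d x))"
    using compactE_image[OF assms(1) _ cover] by (metis open_ball)
  have "f y \<le> Max (B ` S')" if y: "y \<in> S" for y
  proof -
    from S'(3) y obtain x where x: "x \<in> S'" "y \<in> ball x (d x)" by auto
    then have "f y \<le> B x" using d S'(1) y by (auto simp: dist_commute)
    also have "\<dots> \<le> Max (B ` S')" using x S'(2) by (intro Max_ge) auto
    finally show ?thesis .
  qed
  then show ?thesis by (intro bdd_aboveI2) blast
qed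

lemma C_Hs_locally_bounded:
  assumes u: "in_C_Hs s T u" and t0: "t0 \<in> {-T..T}"
  shows "\<exists>d>0. \<forall>t\<in>{-T..T}. dist t t0 < d \<longrightarrow>
    Hs_norm s (u t) \<le> sqrt (2 + 2 * (Hs_norm s (u t0))\<^sup>2)"
proof -
  have "((\<lambda>t. Hs_norm s (\<lambda>\<xi>. u t \<xi> - u t0 \<xi>)) \<longlongrightarrow> 0) (at t0 within {-T..T})"
    using u t0 by (auto simp: in_C_Hs_def)
  then have "eventually (\<lambda>t. dist (Hs_norm s (\<lambda>\<xi>. u t \<xi> - u t0 \<xi>)) 0 < 1) (at t0 within {-T..T})"
    unfolding tendsto_iff by simp
  then obtain d where d: "d > 0" and near: "\<forall>t\<in>{-T..T}. t \<noteq> t0 \<and> dist t t0 < d \<longrightarrow>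
      dist (Hs_norm s (\<lambda>\<xi>. u t \<xi> - u t0 \<xi>)) 0 < 1"
    unfolding eventually_at by blast
  have close: "Hs_norm s (\<lambda>\<xi>. u t \<xi> - u t0 \<xi>) < 1"
    if "t \<in> {-T..T}" "t \<noteq> t0" "dist t t0 < d" for t
  proof -
    have "dist (Hs_norm s (\<lambda>\<xi>. u t \<xi> - u t0 \<xi>)) 0 < 1" using near that by blast
    then show ?thesis using Hs_norm_nonneg[of s "\<lambda>\<xi>. u t \<xi> - u t0 \<xi>"] by simp
  qed
  have "Hs_norm s (u t) \<le> sqrt (2 + 2 * (Hs_norm s (u t0))\<^sup>2)"
    if t: "t \<in> {-T..T}" "dist t t0 < d" for t
  proof (cases "t = t0")
    case True
    then show ?thesis using Hs_norm_nonneg[of s "u t0"] by (simp add: real_le_rsqrt)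
  next
    case False
    have "(Hs_norm s (\<lambda>\<xi>. u t \<xi> - u t0 \<xi>))\<^sup>2 \<le> 1"
      using close[OF t(1) False t(2)] Hs_norm_nonneg by (simp add: power_le_one)
    moreover have "(Hs_norm s (u t))\<^sup>2 \<le> 2 * (Hs_norm s (\<lambda>\<xi>. u t \<xi> - u t0 \<xi>))\<^sup>2 + 2 * (Hs_norm s (u t0))\<^sup>2"
      using u t t0 by (intro Hs_norm_quasi_triangle) (auto simp: in_C_Hs_def)
    ultimately show ?thesis by (simp add: real_le_rsqrt)
  qed
  then show ?thesis using d by blast
qed

lemma Hs_norm_le_C_Hs_norm:
  assumes "in_C_Hs s T u" "t \<in> {-T..T}"
  shows "Hs_norm s (u t) \<le> C_Hs_norm s T u"
proof -
  have "bdd_above ((\<lambda>t. Hs_norm s (u t)) ` {-T..T})"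
    using C_Hs_locally_bounded[OF assms(1)] by (intro compact_locally_bdd_above) auto
  then show ?thesis unfolding C_Hs_norm_def using assms(2) by (intro cSUP_upper) auto
qed

lemma Hs_indicator:
  fixes p q s :: real
  assumes pq: "0 \<le> p" "p \<le> q" "q \<le> p + 1"
  shows "in_Hs s (\<lambda>\<eta>. complex_of_real (indicator {p..q} \<eta>))"
    and "(Hs_norm s (\<lambda>\<eta>. complex_of_real (indicator {p..q} \<eta>)))\<^sup>2 \<le> (q - p) * ((1 + p\<^sup>2) powr s * 4 powr \<bar>s\<bar>)"
proof -
  have eq: "(\<lambda>\<xi>. (1 + \<xi>\<^sup>2) powr s * (cmod (complex_of_real (indicator {p..q} \<xi>)))\<^sup>2)
      = (\<lambda>\<xi>. indicator {p..q} \<xi> *\<^sub>R (1 + \<xi>\<^sup>2) powr s)"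
    by (rule ext) (simp add: indicator_def)
  have "continuous_on {p..q} (\<lambda>\<xi>::real. (1 + \<xi>\<^sup>2) powr s)"
    by (intro continuous_intros) (auto, metis add_pos_nonneg less_irrefl zero_le_power2 zero_less_one)
  then have int: "integrable lborel (\<lambda>\<xi>. indicator {p..q} \<xi> *\<^sub>R (1 + \<xi>\<^sup>2) powr s)"
    by (rule borel_integrable_compact[OF compact_Icc])
  then show "in_Hs s (\<lambda>\<eta>. complex_of_real (indicator {p..q} \<eta>))"
    unfolding in_Hs_def eq by simp
  have "(Hs_norm s (\<lambda>\<eta>. complex_of_real (indicator {p..q} \<eta>)))\<^sup>2
      = (\<integral>\<xi>. indicator {p..q} \<xi> *\<^sub>R (1 + \<xi>\<^sup>2) powr s \<partial>lborel)"
    unfolding Hs_norm_sq eq ..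
  also have "\<dots> \<le> (\<integral>\<xi>. indicator {p..q} \<xi> * ((1 + p\<^sup>2) powr s * 4 powr \<bar>s\<bar>) \<partial>lborel)"
  proof (rule integral_mono[OF int integrable_indicator_const])
    show "indicator {p..q} \<xi> *\<^sub>R (1 + \<xi>\<^sup>2) powr s \<le> indicator {p..q} \<xi> * ((1 + p\<^sup>2) powr s * 4 powr \<bar>s\<bar>)"
      for \<xi> using sobolev_weight_comparable(1)[of p \<xi> s] pq by (cases "\<xi> \<in> {p..q}") auto
  qed
  also have "\<dots> = (q - p) * ((1 + p\<^sup>2) powr s * 4 powr \<bar>s\<bar>)"
    using pq by simp
  finally show "(Hs_norm s (\<lambda>\<eta>. complex_of_real (indicator {p..q} \<eta>)))\<^sup>2
      \<le> (q - p) * ((1 + p\<^sup>2) powr s * 4 powr \<bar>s\<bar>)" .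
qed

lemma Hs_norm_sq_ge_on_interval:
  assumes g: "in_Hs s g" and pq: "0 \<le> N" "N \<le> p" "p \<le> q" "q \<le> N + 1"
    and m: "0 \<le> m" "\<And>\<xi>. \<xi> \<in> {p..q} \<Longrightarrow> m \<le> cmod (g \<xi>)"
  shows "(q - p) * ((1 + N\<^sup>2) powr s * 4 powr (-\<bar>s\<bar>) * m\<^sup>2) \<le> (Hs_norm s g)\<^sup>2"
proof -
  define c where "c = (1 + N\<^sup>2) powr s * 4 powr (-\<bar>s\<bar>) * m\<^sup>2"
  have "(q - p) * c = (\<integral>\<xi>. indicator {p..q} \<xi> * c \<partial>lborel)"
    using pq by simp
  also have "\<dots> \<le> (\<integral>\<xi>. (1 + \<xi>\<^sup>2) powr s * (cmod (g \<xi>))\<^sup>2 \<partial>lborel)"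
  proof (rule integral_mono[OF integrable_indicator_const])
    show "integrable lborel (\<lambda>\<xi>. (1 + \<xi>\<^sup>2) powr s * (cmod (g \<xi>))\<^sup>2)"
      using g by (simp add: in_Hs_def)
    fix \<xi> :: real
    show "indicator {p..q} \<xi> * c \<le> (1 + \<xi>\<^sup>2) powr s * (cmod (g \<xi>))\<^sup>2"
    proof (cases "\<xi> \<in> {p..q}")
      case True
      have "m\<^sup>2 \<le> (cmod (g \<xi>))\<^sup>2" using m(1) m(2)[OF True] by (intro power_mono)
      moreover have "(1 + N\<^sup>2) powr s * 4 powr (-\<bar>s\<bar>) \<le> (1 + \<xi>\<^sup>2) powr s"
        using sobolev_weight_comparable(2)[of N \<xi> s] True pq by auto
      ultimately show ?thesis using True unfolding c_def by (simp add: mult_mono)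
    qed simp
  qed
  finally show ?thesis unfolding Hs_norm_sq c_def .
qed

lemma le_max_zero_mult:
  fixes y c x :: real
  assumes "y \<le> c * x" "0 \<le> x"
  shows "y \<le> max c 0 * x"
  using assms by (smt (verit) mult_right_mono max.cobounded1)

lemma duhamel_bilinear_bound:
  assumes T: "T > 0" and X: "seminormed_fun_space X Nm"
    and c1: "\<forall>u\<in>X. in_C_Hs s T u \<and> C_Hs_norm s T u \<le> C1 * Nm u"
    and c2: "\<forall>g. in_Hs s g \<longrightarrow> free_evol j T g \<in> X \<and> Nm (free_evol j T g) \<le> C2 * Hs_norm s g"
    and c3: "\<forall>u\<in>X. \<forall>v\<in>X. duhamel j T a u v \<in> X \<and> Nm (duhamel j T a u v) \<le> C3 * Nm u * Nm v"
    and g1: "in_Hs s g1" and g2: "in_Hs s g2"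
  defines "D \<equiv> duhamel j T a (free_evol j T g1) (free_evol j T g2)"
  shows "in_Hs s (D T)"
    and "Hs_norm s (D T) \<le> max C1 0 * max C3 0 * (max C2 0)\<^sup>2 * Hs_norm s g1 * Hs_norm s g2"
proof -
  define w1 w2 where "w1 = free_evol j T g1" and "w2 = free_evol j T g2"
  have Nm_nonneg: "\<And>u. u \<in> X \<Longrightarrow> 0 \<le> Nm u"
    using X by (simp add: seminormed_fun_space_def)
  have w: "w1 \<in> X" "w2 \<in> X" and w1: "Nm w1 \<le> max C2 0 * Hs_norm s g1"
    and w2: "Nm w2 \<le> max C2 0 * Hs_norm s g2"
    using c2 g1 g2 Hs_norm_nonneg by (auto simp: w1_def w2_def intro: le_max_zero_mult)
  have DX: "D \<in> X" using c3 w by (simp add: D_def w1_def w2_def)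
  have "Nm D \<le> max C3 0 * (Nm w1 * Nm w2)"
    using c3 w Nm_nonneg by (auto simp: D_def w1_def w2_def mult.assoc intro: le_max_zero_mult)
  also have "\<dots> \<le> max C3 0 * ((max C2 0 * Hs_norm s g1) * (max C2 0 * Hs_norm s g2))"
    using w w1 w2 Nm_nonneg Hs_norm_nonneg[of s g1] by (intro mult_left_mono mult_mono) auto
  finally have ND: "Nm D \<le> max C3 0 * ((max C2 0 * Hs_norm s g1) * (max C2 0 * Hs_norm s g2))" .
  have DC: "in_C_Hs s T D" and "C_Hs_norm s T D \<le> max C1 0 * Nm D"
    using c1 DX Nm_nonneg by (auto intro: le_max_zero_mult)
  moreover have TT: "T \<in> {-T..T}" using T by simp
  ultimately show "in_Hs s (D T)" by (simp add: in_C_Hs_def)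
  have "Hs_norm s (D T) \<le> C_Hs_norm s T D" by (rule Hs_norm_le_C_Hs_norm[OF DC TT])
  also have "\<dots> \<le> max C1 0 * Nm D" by fact
  also have "\<dots> \<le> max C1 0 * (max C3 0 * ((max C2 0 * Hs_norm s g1) * (max C2 0 * Hs_norm s g2)))"
    using ND by (intro mult_left_mono) auto
  finally show "Hs_norm s (D T) \<le> max C1 0 * max C3 0 * (max C2 0)\<^sup>2 * Hs_norm s g1 * Hs_norm s g2"
    by (simp add: power2_eq_square algebra_simps)
qed

text \<open>The symbol of the nonlinearity:
  $P(\eta,\zeta) = \sum_{l_1 \le l_2 \le 2j} a_{l_1,l_2}\,(i\eta)^{l_1}(i\zeta)^{l_2}$, so that
  the Fourier transform of $\sum a_{l_1,l_2}\,\partial_x^{l_1}u\,\partial_x^{l_2}v$ is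
  $\frac1{2\pi}\int P(\eta,\xi-\eta)\,\hat u(\eta)\,\hat v(\xi-\eta)\,d\eta$.\<close>
definition symbol :: "(nat \<Rightarrow> nat \<Rightarrow> complex) \<Rightarrow> nat \<Rightarrow> real \<Rightarrow> real \<Rightarrow> complex" where
  "symbol a j \<eta> \<zeta> = (\<Sum>l2\<in>{0..2*j}. \<Sum>l1\<in>{0..l2}.
     a l1 l2 * (\<i> * complex_of_real \<eta>) ^ l1 * (\<i> * complex_of_real \<zeta>) ^ l2)"

definition coeff_mass :: "(nat \<Rightarrow> nat \<Rightarrow> complex) \<Rightarrow> nat \<Rightarrow> real" where
  "coeff_mass a j = (\<Sum>l2\<in>{0..2*j}. \<Sum>l1\<in>{0..l2}. cmod (a l1 l2))"

text \<open>In the high--low regime ($0 \le \eta \le 1 \le \zeta$, $\eta\zeta^{2j} \le 1$) the symbol is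
  its pure high-frequency term $a_{0,K}(i\zeta)^K$ up to $O(\zeta^{K-1})$, provided $K$ is
  the largest order with $a_{0,K} \ne 0$: every term with $l_1 \ge 1$ is $\le \eta\zeta^{2j}$, and
  every other term with $l_1 = 0$ has order below $K$.\<close>
lemma symbol_leading_term:
  assumes K: "K \<le> 2*j" "1 \<le> K" and top: "\<forall>l2. K < l2 \<and> l2 \<le> 2*j \<longrightarrow> a 0 l2 = 0"
    and \<eta>: "0 \<le> \<eta>" "\<eta> \<le> 1" and \<zeta>: "1 \<le> \<zeta>" and small: "\<eta> * \<zeta> ^ (2*j) \<le> 1"
  shows "cmod (symbol a j \<eta> \<zeta> - a 0 K * (\<i> * complex_of_real \<zeta>) ^ K) \<le> coeff_mass a j * \<zeta> ^ (K - 1)"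
proof -
  define tm where "tm l1 l2 = a l1 l2 * (\<i> * complex_of_real \<eta>) ^ l1 * (\<i> * complex_of_real \<zeta>) ^ l2" for l1 l2
  define rest where "rest l1 l2 = (if l1 = 0 \<and> l2 = K then 0 else tm l1 l2)" for l1 l2
  have lead: "(\<Sum>l2\<in>{0..2*j}. \<Sum>l1\<in>{0..l2}. (if l1 = 0 \<and> l2 = K then tm l1 l2 else 0))
      = a 0 K * (\<i> * complex_of_real \<zeta>) ^ K"
  proof -
    have "(\<Sum>l2\<in>{0..2*j}. \<Sum>l1\<in>{0..l2}. (if l1 = 0 \<and> l2 = K then tm l1 l2 else 0))
        = (\<Sum>l2\<in>{0..2*j}. (if l2 = K then tm 0 l2 else 0))"
      by (intro sum.cong refl) (auto simp: sum.delta)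
    also have "\<dots> = tm 0 K" using K by (simp add: sum.delta)
    finally show ?thesis by (simp add: tm_def)
  qed
  have split: "symbol a j \<eta> \<zeta> = a 0 K * (\<i> * complex_of_real \<zeta>) ^ K + (\<Sum>l2\<in>{0..2*j}. \<Sum>l1\<in>{0..l2}. rest l1 l2)"
    unfolding lead[symmetric] symbol_def tm_def[symmetric] rest_def sum.distrib[symmetric]
    by (intro sum.cong refl) auto
  have bound: "cmod (rest l1 l2) \<le> cmod (a l1 l2) * \<zeta> ^ (K - 1)"
    if l: "l2 \<le> 2*j" "l1 \<le> l2" for l1 l2
  proof -
    have norm_tm: "cmod (tm l1 l2) = cmod (a l1 l2) * (\<eta> ^ l1 * \<zeta> ^ l2)"
      using \<eta> \<zeta> by (simp add: tm_def norm_mult norm_power)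
    consider "l1 = 0" "l2 = K" | "l1 = 0" "K < l2" | "l1 = 0" "l2 < K" | "l1 \<noteq> 0" by linarith
    then show ?thesis
    proof cases
      case 2
      then show ?thesis using top l by (simp add: rest_def tm_def)
    next
      case 3
      then have "\<zeta> ^ l2 \<le> \<zeta> ^ (K - 1)" using \<zeta> by (intro power_increasing) auto
      then show ?thesis using norm_tm 3 by (simp add: rest_def mult_left_mono)
    next
      case 4
      have "\<eta> ^ l1 * \<zeta> ^ l2 \<le> \<eta> ^ 1 * \<zeta> ^ (2*j)"
        using \<eta> \<zeta> l 4 by (intro mult_mono power_decreasing power_increasing) auto
      also have "\<dots> \<le> \<zeta> ^ (K - 1)" using small \<zeta> by (simp add: order_trans[OF _ one_le_power])
      finally show ?thesis using norm_tm 4 by (simp add: rest_def mult_left_mono)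
    qed (use \<zeta> in \<open>simp add: rest_def\<close>)
  qed
  have "cmod (symbol a j \<eta> \<zeta> - a 0 K * (\<i> * complex_of_real \<zeta>) ^ K)
      = cmod (\<Sum>l2\<in>{0..2*j}. \<Sum>l1\<in>{0..l2}. rest l1 l2)"
    using split by simp
  also have "\<dots> \<le> (\<Sum>l2\<in>{0..2*j}. \<Sum>l1\<in>{0..l2}. cmod (rest l1 l2))"
    by (rule order_trans[OF norm_sum sum_mono[OF norm_sum]])
  also have "\<dots> \<le> (\<Sum>l2\<in>{0..2*j}. \<Sum>l1\<in>{0..l2}. cmod (a l1 l2) * \<zeta> ^ (K - 1))"
    by (intro sum_mono bound) auto
  also have "\<dots> = coeff_mass a j * \<zeta> ^ (K - 1)"
    unfolding coeff_mass_def by (simp add: sum_distrib_right)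
  finally show ?thesis .
qed

lemma Re_rotated_leading_term:
  fixes c :: complex and \<zeta> \<theta> :: real
  assumes "c \<noteq> 0"
  shows "Re (cnj (c * \<i> ^ K) / cmod c * exp (\<i> * complex_of_real \<theta>) * (c * (\<i> * complex_of_real \<zeta>) ^ K))
    = cmod c * \<zeta> ^ K * cos \<theta>"
proof -
  have "cnj (c * \<i> ^ K) * (c * \<i> ^ K) = complex_of_real ((cmod (c * \<i> ^ K))\<^sup>2)"
    by (simp only: complex_norm_square mult.commute)
  then have "cnj (c * \<i> ^ K) / cmod c * (c * (\<i> * complex_of_real \<zeta>) ^ K) = complex_of_real (cmod c * \<zeta> ^ K)"
    using assms by (simp add: power_mult_distrib norm_mult norm_power power2_eq_square field_simps)
  then have "cnj (c * \<i> ^ K) / cmod c * exp (\<i> * complex_of_real \<theta>) * (c * (\<i> * complex_of_real \<zeta>) ^ K)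
      = complex_of_real (cmod c * \<zeta> ^ K) * exp (\<i> * complex_of_real \<theta>)"
    by (metis mult.commute mult.left_commute)
  then show ?thesis by (simp add: Re_exp del: of_real_mult)
qed

lemma Re_rotated_symbol_ge:
  assumes K: "K \<le> 2*j" "1 \<le> K" and top: "\<forall>l2. K < l2 \<and> l2 \<le> 2*j \<longrightarrow> a 0 l2 = 0"
    and aK: "a 0 K \<noteq> 0"
    and \<eta>: "0 \<le> \<eta>" "\<eta> \<le> 1" and \<zeta>: "N \<le> \<zeta>" and N1: "1 \<le> N" and small: "\<eta> * \<zeta> ^ (2*j) \<le> 1"
    and N_large: "4 * coeff_mass a j \<le> cmod (a 0 K) * N"
    and \<theta>: "\<bar>\<theta>\<bar> \<le> 1"
  shows "cmod (a 0 K) * N ^ K / 4 \<le>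
    Re (cnj (a 0 K * \<i> ^ K) / cmod (a 0 K) * exp (\<i> * complex_of_real \<theta>) * symbol a j \<eta> \<zeta>)"
proof -
  define \<omega> where "\<omega> = cnj (a 0 K * \<i> ^ K) / cmod (a 0 K) * exp (\<i> * complex_of_real \<theta>)"
  define M where "M = a 0 K * (\<i> * complex_of_real \<zeta>) ^ K"
  have \<zeta>1: "1 \<le> \<zeta>" using \<zeta> N1 by simp
  have norm_\<omega>: "cmod \<omega> = 1" using aK by (simp add: \<omega>_def norm_mult norm_divide norm_power)
  have "cmod (a 0 K) * \<zeta> ^ K * (1/2) \<le> cmod (a 0 K) * \<zeta> ^ K * cos \<theta>"
    using cos_ge_half[OF \<theta>] \<zeta>1 by (intro mult_left_mono) auto
  also have "\<dots> = Re (\<omega> * M)"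
    unfolding \<omega>_def M_def by (rule Re_rotated_leading_term[OF aK, symmetric])
  finally have "cmod (a 0 K) * \<zeta> ^ K / 2 \<le> Re (\<omega> * M)" by simp
  moreover have "- Re (\<omega> * (symbol a j \<eta> \<zeta> - M)) \<le> coeff_mass a j * \<zeta> ^ (K - 1)"
  proof -
    have "- Re (\<omega> * (symbol a j \<eta> \<zeta> - M)) \<le> cmod (\<omega> * (symbol a j \<eta> \<zeta> - M))"
      using abs_Re_le_cmod by (smt (verit))
    also have "\<dots> = cmod (symbol a j \<eta> \<zeta> - M)" by (simp add: norm_mult norm_\<omega>)
    also have "\<dots> \<le> coeff_mass a j * \<zeta> ^ (K - 1)"
      unfolding M_def using symbol_leading_term[of K j a \<eta> \<zeta>] K top \<eta> \<zeta>1 small by blast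
    finally show ?thesis .
  qed
  moreover have "cmod (a 0 K) * N ^ K / 4 \<le> cmod (a 0 K) * \<zeta> ^ K / 2 - coeff_mass a j * \<zeta> ^ (K - 1)"
  proof -
    have \<zeta>K: "\<zeta> ^ K = \<zeta> * \<zeta> ^ (K - 1)" using K by (simp add: power_eq_if)
    have "cmod (a 0 K) * N \<le> cmod (a 0 K) * \<zeta>" using \<zeta> by (intro mult_left_mono) auto
    then have "coeff_mass a j * \<zeta> ^ (K - 1) \<le> cmod (a 0 K) * \<zeta> / 4 * \<zeta> ^ (K - 1)"
      using N_large \<zeta>1 by (intro mult_right_mono) auto
    also have "\<dots> = cmod (a 0 K) * \<zeta> ^ K / 4" by (simp add: \<zeta>K)
    finally have "coeff_mass a j * \<zeta> ^ (K - 1) \<le> cmod (a 0 K) * \<zeta> ^ K / 4" .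
    moreover have "cmod (a 0 K) * N ^ K \<le> cmod (a 0 K) * \<zeta> ^ K"
      using \<zeta> N1 by (intro mult_left_mono power_mono) auto
    ultimately show ?thesis by linarith
  qed
  moreover have "\<omega> * M + \<omega> * (symbol a j \<eta> \<zeta> - M) = \<omega> * symbol a j \<eta> \<zeta>"
    by (simp add: algebra_simps)
  then have "Re (\<omega> * M) + Re (\<omega> * (symbol a j \<eta> \<zeta> - M)) = Re (\<omega> * symbol a j \<eta> \<zeta>)"
    by (metis plus_complex.sel(1))
  ultimately show ?thesis unfolding \<omega>_def by linarith
qed

definition low_bump :: "real \<Rightarrow> real \<Rightarrow> complex" where
  "low_bump \<delta> \<eta> = complex_of_real (indicator {0..\<delta>} \<eta>)"

definition high_bump :: "real \<Rightarrow> real \<Rightarrow> complex" where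
  "high_bump N \<eta> = complex_of_real (indicator {N..N+1} \<eta>)"

lemma norm_disp: "cmod (disp j \<xi> t) = 1"
  unfolding disp_def by (rule norm_exp_i_times)

lemma disp_resonance:
  "cnj (disp j \<xi> T) * disp j \<xi> (T - t) * disp j \<eta> t * disp j (\<xi> - \<eta>) t
    = exp (\<i> * complex_of_real ((-1) ^ (j + 1) * t * (\<eta> ^ (2*j+1) + (\<xi> - \<eta>) ^ (2*j+1) - \<xi> ^ (2*j+1))))"
proof -
  define c :: real where "c = (-1) ^ (j + 1)"
  define m where "m = 2 * j + 1"
  have mult: "exp (\<i> * complex_of_real x) * exp (\<i> * complex_of_real y) = exp (\<i> * complex_of_real (x + y))"
    for x y by (simp add: exp_add[symmetric] distrib_left)
  have conj: "cnj (exp (\<i> * complex_of_real x)) = exp (\<i> * complex_of_real (- x))"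
    for x by (simp add: exp_cnj)
  have "cnj (disp j \<xi> T) * disp j \<xi> (T - t) * disp j \<eta> t * disp j (\<xi> - \<eta>) t
     = exp (\<i> * complex_of_real (- (c * \<xi> ^ m * T) + c * \<xi> ^ m * (T - t) + c * \<eta> ^ m * t + c * (\<xi> - \<eta>) ^ m * t))"
    unfolding disp_def c_def[symmetric] m_def[symmetric] by (simp only: conj mult)
  also have "- (c * \<xi> ^ m * T) + c * \<xi> ^ m * (T - t) + c * \<eta> ^ m * t + c * (\<xi> - \<eta>) ^ m * t
      = c * t * (\<eta> ^ m + (\<xi> - \<eta>) ^ m - \<xi> ^ m)"
    by (simp add: algebra_simps)
  finally show ?thesis by (simp add: c_def m_def)
qed


text \<open>The constant $\kappa$ of the final estimate $\kappa N^2 \le M^2\,4^{3|s|}$; it depends on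
  $j$, $T$ and $|a_{0,K}|$ but not on $N$.\<close>
definition growth_const :: "nat \<Rightarrow> real \<Rightarrow> real \<Rightarrow> real" where
  "growth_const j T c = 3 * T\<^sup>2 * c\<^sup>2 / (256 * pi\<^sup>2 * (T * (2*j+2) + 1) * 4 ^ j)"

lemma growth_const_pos: "0 < T \<Longrightarrow> 0 < c \<Longrightarrow> 0 < growth_const j T c"
  unfolding growth_const_def by (intro divide_pos_pos mult_pos_pos) (auto simp: add_pos_nonneg)

lemma leading_index:
  fixes j :: nat and a :: "nat \<Rightarrow> nat \<Rightarrow> complex"
  assumes "\<exists>k. j < k \<and> k \<le> 2 * j \<and> a 0 k \<noteq> 0"
  obtains K where "j < K" "K \<le> 2*j" "a 0 K \<noteq> 0" "\<forall>l2. K < l2 \<and> l2 \<le> 2*j \<longrightarrow> a 0 l2 = 0"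
proof -
  define S where "S = {k. j < k \<and> k \<le> 2*j \<and> a 0 k \<noteq> 0}"
  have fin: "finite S" unfolding S_def by (rule finite_subset[of _ "{..2*j}"]) auto
  have "S \<noteq> {}" using assms by (auto simp: S_def)
  then have "Max S \<in> S" using fin by (rule Max_in[rotated])
  then have max_S: "j < Max S" "Max S \<le> 2*j" "a 0 (Max S) \<noteq> 0" by (simp_all add: S_def)
  have "\<forall>l2. Max S < l2 \<and> l2 \<le> 2*j \<longrightarrow> a 0 l2 = 0"
  proof (intro allI impI)
    fix l2 assume l2: "Max S < l2 \<and> l2 \<le> 2*j"
    show "a 0 l2 = 0"
    proof (rule ccontr)
      assume "a 0 l2 \<noteq> 0"
      then have "l2 \<in> S" using l2 max_S(1) by (simp add: S_def)
      then show False using Max_ge[OF fin, of l2] l2 by linarith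
    qed
  qed
  then show ?thesis by (rule that[OF max_S])
qed

context
  fixes j :: nat and T :: real and a :: "nat \<Rightarrow> nat \<Rightarrow> complex" and K :: nat and N :: real
  assumes j1: "1 \<le> j" and T0: "0 < T" and KJ: "j < K" "K \<le> 2*j" and aK: "a 0 K \<noteq> 0"
    and top: "\<forall>l2. K < l2 \<and> l2 \<le> 2*j \<longrightarrow> a 0 l2 = 0"
    and N1: "1 \<le> N" and N_large: "4 * coeff_mass a j \<le> cmod (a 0 K) * N"
begin

text \<open>The width $\delta \sim T^{-1} N^{-2j}$ of the low bump: small enough that the
  resonance phase stays below one on the whole interaction region.\<close>
definition width :: real where
  "width = 1 / ((T * (2*j+2) + 1) * (N+1)^(2*j))"

lemma width_pos: "0 < width"
  using T0 N1 unfolding width_def by (simp add: add_pos_nonneg)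

lemma width_resonance: "T * (2*j+2) * width * (N+1)^(2*j) \<le> 1"
  and width_small: "width * (N+1)^(2*j) \<le> 1"
proof -
  have q: "width * (N+1)^(2*j) = 1 / (T * (2*j+2) + 1)"
    using N1 unfolding width_def by simp
  have E: "0 \<le> T * (2*j+2)" using T0 by simp
  have "T * (2*j+2) * width * (N+1)^(2*j) = T * (2*j+2) * (width * (N+1)^(2*j))"
    by (simp only: mult.assoc)
  also have "\<dots> = T * (2*j+2) / (T * (2*j+2) + 1)" using q by simp
  also have "\<dots> \<le> 1" using E by simp
  finally show "T * (2*j+2) * width * (N+1)^(2*j) \<le> 1" .
  show "width * (N+1)^(2*j) \<le> 1" using q E by simp
qed

lemma width_le: "width \<le> 1/4"
proof -
  have "(4::real) = 2 ^ (2*1)" by simp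
  also have "\<dots> \<le> 2 ^ (2*j)" using j1 by (intro power_increasing) auto
  also have "\<dots> \<le> (N+1)^(2*j)" using N1 by (intro power_mono) auto
  finally have "width * 4 \<le> width * (N+1)^(2*j)" using width_pos by (intro mult_left_mono) auto
  then show ?thesis using width_small by simp
qed

lemma resonance_phase_le_one:
  assumes t: "t \<in> {0..T}" and \<eta>: "\<eta> \<in> {0..width}" and \<xi>: "\<xi> \<in> {N+width..N+1}"
  shows "\<bar>(-1) ^ (j + 1) * t * (\<eta> ^ (2*j+1) + (\<xi> - \<eta>) ^ (2*j+1) - \<xi> ^ (2*j+1))\<bar> \<le> 1"
proof -
  define m where "m = 2 * j + 1"
  define \<zeta> where "\<zeta> = \<xi> - \<eta>"
  have e0: "0 \<le> \<eta>" "\<eta> \<le> width" using \<eta> by auto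
  have dle: "width \<le> 1" using width_le by simp
  have z0: "N \<le> \<zeta>" using \<xi> \<eta> by (auto simp: \<zeta>_def)
  have x0: "0 \<le> \<xi>" "\<xi> \<le> N + 1" using \<xi> N1 width_pos by auto
  have xz: "\<xi> = \<zeta> + \<eta>" by (simp add: \<zeta>_def)
  have up: "\<xi> ^ m \<le> \<zeta> ^ m + real m * \<eta> * \<xi> ^ (2*j)"
    using power_Suc_increment_le[of \<zeta> \<eta> "2*j"] z0 e0 N1 unfolding xz m_def by auto
  have lo: "\<zeta> ^ m \<le> \<xi> ^ m" unfolding xz using z0 e0 N1 by (intro power_mono) auto
  have "\<eta> ^ m \<le> \<eta> ^ 1" using e0 dle unfolding m_def by (intro power_decreasing) auto
  then have em: "\<eta> ^ m \<le> width * (N+1)^(2*j)"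
    using e0 width_pos N1 by (smt (verit) mult_le_cancel_left1 one_le_power power_one_right)
  have a1: "real m * \<eta> * \<xi> ^ (2*j) \<le> real m * width * (N+1)^(2*j)"
    using e0 x0 by (intro mult_mono power_mono) auto
  have wX: "0 \<le> width * (N+1)^(2*j)" using width_pos N1 by simp
  have split: "real (2*j+2) * width * (N+1)^(2*j) = real m * width * (N+1)^(2*j) + width * (N+1)^(2*j)"
    by (simp add: m_def algebra_simps)
  have "0 \<le> \<eta> ^ m" using e0 by simp
  then have "\<bar>\<eta> ^ m + \<zeta> ^ m - \<xi> ^ m\<bar> \<le> real (2*j+2) * width * (N+1)^(2*j)"
    unfolding abs_le_iff split using up lo em a1 wX by linarith
  then have "\<bar>t\<bar> * \<bar>\<eta> ^ m + \<zeta> ^ m - \<xi> ^ m\<bar> \<le> T * (real (2*j+2) * width * (N+1)^(2*j))"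
    using t by (intro mult_mono) auto
  also have "\<dots> \<le> 1" using width_resonance by (simp add: algebra_simps)
  finally show ?thesis by (simp add: m_def \<zeta>_def abs_mult power_abs)
qed

definition test_duhamel :: "real \<Rightarrow> real \<Rightarrow> complex" where
  "test_duhamel = duhamel j T a (free_evol j T (low_bump width)) (free_evol j T (high_bump N))"

definition integrand :: "real \<Rightarrow> real \<Rightarrow> complex" where
  "integrand \<xi> t' = disp j \<xi> (T - t') *
     nonlin_hat j a (free_evol j T (low_bump width)) (free_evol j T (high_bump N)) t' \<xi>"

text \<open>On the interaction region, the frequency convolution in the integrand only sees the
  low bump's support $[0,\delta]$, where the high bump equals one at $\xi - \eta$; what is
  integrated is the kernel below.\<close>
definition kernel :: "real \<Rightarrow> real \<Rightarrow> real \<Rightarrow> complex" where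
  "kernel t' \<xi> \<eta> = complex_of_real (1 / (2 * pi)) * disp j \<xi> (T - t') * disp j \<eta> t' *
     disp j (\<xi> - \<eta>) t' * symbol a j \<eta> (\<xi> - \<eta>)"

lemma kernel_integrable: "integrable lborel (\<lambda>\<eta>. indicator {0..width} \<eta> *\<^sub>R kernel t' \<xi> \<eta>)"
proof (rule borel_integrable_compact[OF compact_Icc])
  show "continuous_on {0..width} (kernel t' \<xi>)"
    unfolding kernel_def disp_def symbol_def by (intro continuous_intros)
qed

lemma integrand_eq:
  assumes t: "t' \<in> {0..T}" and \<xi>: "\<xi> \<in> {N+width..N+1}"
  shows "integrand \<xi> t' = (\<integral>\<eta>. indicator {0..width} \<eta> *\<^sub>R kernel t' \<xi> \<eta> \<partial>lborel)"
proof -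
  define X where "X l1 l2 \<eta> = (\<i> * complex_of_real \<eta>) ^ l1 * disp j \<eta> t' *
    (\<i> * complex_of_real (\<xi> - \<eta>)) ^ l2 * disp j (\<xi> - \<eta>) t'" for l1 l2 \<eta>
  define c where "c = complex_of_real (1 / (2 * pi))"
  have tT: "t' \<in> {-T..T}" using t T0 by auto
  have supp: "(\<i> * complex_of_real \<eta>) ^ l1 * free_evol j T (low_bump width) t' \<eta> *
      (\<i> * complex_of_real (\<xi> - \<eta>)) ^ l2 * free_evol j T (high_bump N) t' (\<xi> - \<eta>)
      = indicator {0..width} \<eta> *\<^sub>R X l1 l2 \<eta>" for l1 l2 \<eta>
  proof (cases "\<eta> \<in> {0..width}")
    case True
    then have "\<xi> - \<eta> \<in> {N..N+1}" using \<xi> by auto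
    then show ?thesis using True tT by (simp add: free_evol_def low_bump_def high_bump_def X_def)
  qed (use tT in \<open>simp add: free_evol_def low_bump_def X_def\<close>)
  have int: "integrable lborel (\<lambda>\<eta>. a l1 l2 * c * (indicator {0..width} \<eta> *\<^sub>R X l1 l2 \<eta>))" for l1 l2
  proof (intro integrable_mult_right borel_integrable_compact[OF compact_Icc])
    show "continuous_on {0..width} (X l1 l2)" unfolding X_def disp_def by (intro continuous_intros)
  qed
  have "nonlin_hat j a (free_evol j T (low_bump width)) (free_evol j T (high_bump N)) t' \<xi>
      = (\<Sum>l2\<in>{0..2*j}. \<Sum>l1\<in>{0..l2}. (\<integral>\<eta>. a l1 l2 * c * (indicator {0..width} \<eta> *\<^sub>R X l1 l2 \<eta>) \<partial>lborel))"
    unfolding nonlin_hat_def c_def supp by (simp only: integral_mult_right_zero)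
  also have "\<dots> = (\<Sum>l2\<in>{0..2*j}. (\<integral>\<eta>. (\<Sum>l1\<in>{0..l2}. a l1 l2 * c * (indicator {0..width} \<eta> *\<^sub>R X l1 l2 \<eta>)) \<partial>lborel))"
    by (intro sum.cong refl Bochner_Integration.integral_sum[symmetric] int)
  also have "\<dots> = (\<integral>\<eta>. (\<Sum>l2\<in>{0..2*j}. \<Sum>l1\<in>{0..l2}. a l1 l2 * c * (indicator {0..width} \<eta> *\<^sub>R X l1 l2 \<eta>)) \<partial>lborel)"
    by (intro Bochner_Integration.integral_sum[symmetric] Bochner_Integration.integrable_sum int)
  finally have "integrand \<xi> t' = (\<integral>\<eta>. disp j \<xi> (T - t') *
      (\<Sum>l2\<in>{0..2*j}. \<Sum>l1\<in>{0..l2}. a l1 l2 * c * (indicator {0..width} \<eta> *\<^sub>R X l1 l2 \<eta>)) \<partial>lborel)"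
    unfolding integrand_def by simp
  also have "\<dots> = (\<integral>\<eta>. indicator {0..width} \<eta> *\<^sub>R kernel t' \<xi> \<eta> \<partial>lborel)"
  proof (rule Bochner_Integration.integral_cong[OF refl])
    show "disp j \<xi> (T - t') * (\<Sum>l2\<in>{0..2*j}. \<Sum>l1\<in>{0..l2}. a l1 l2 * c * (indicator {0..width} \<eta> *\<^sub>R X l1 l2 \<eta>))
        = indicator {0..width} \<eta> *\<^sub>R kernel t' \<xi> \<eta>" for \<eta>
      by (cases "\<eta> \<in> {0..width}")
        (simp_all add: kernel_def symbol_def X_def c_def sum_distrib_left algebra_simps)
  qed
  finally show ?thesis .
qed

text \<open>The unimodular factor that undoes the free evolution at time $T$ and the phase of
  the leading coefficient, and the resulting lower bound for the rotated kernel.\<close>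
definition rotation :: "real \<Rightarrow> complex" where
  "rotation \<xi> = cnj (disp j \<xi> T) * (cnj (a 0 K * \<i> ^ K) / cmod (a 0 K))"

definition coherent_level :: real where
  "coherent_level = cmod (a 0 K) * N ^ K / (8 * pi)"

lemma norm_rotation: "cmod (rotation \<xi>) = 1"
  using aK by (simp add: rotation_def norm_mult norm_divide norm_power norm_disp)

lemma kernel_Re_ge:
  assumes t: "t' \<in> {0..T}" and \<xi>: "\<xi> \<in> {N+width..N+1}" and \<eta>: "\<eta> \<in> {0..width}"
  shows "coherent_level \<le> Re (rotation \<xi> * kernel t' \<xi> \<eta>)"
proof -
  define \<theta> where "\<theta> = (-1) ^ (j + 1) * t' * (\<eta> ^ (2*j+1) + (\<xi> - \<eta>) ^ (2*j+1) - \<xi> ^ (2*j+1))"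
  define \<omega> where "\<omega> = cnj (a 0 K * \<i> ^ K) / cmod (a 0 K)"
  have "rotation \<xi> * kernel t' \<xi> \<eta> = complex_of_real (1 / (2 * pi)) *
      ((cnj (disp j \<xi> T) * disp j \<xi> (T - t') * disp j \<eta> t' * disp j (\<xi> - \<eta>) t') * \<omega> * symbol a j \<eta> (\<xi> - \<eta>))"
    unfolding rotation_def kernel_def \<omega>_def by (simp only: ac_simps)
  also have "\<dots> = complex_of_real (1 / (2 * pi)) * (\<omega> * exp (\<i> * complex_of_real \<theta>) * symbol a j \<eta> (\<xi> - \<eta>))"
    unfolding disp_resonance \<theta>_def by (simp only: ac_simps)
  finally have Re_eq: "Re (rotation \<xi> * kernel t' \<xi> \<eta>) = Re (\<omega> * exp (\<i> * complex_of_real \<theta>) * symbol a j \<eta> (\<xi> - \<eta>)) / (2 * pi)"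
    by simp
  have \<eta>0: "0 \<le> \<eta>" "\<eta> \<le> 1" using \<eta> width_le by auto
  have \<zeta>: "N \<le> \<xi> - \<eta>" "\<xi> - \<eta> \<le> N + 1" using \<xi> \<eta> by auto
  have "\<eta> * (\<xi> - \<eta>) ^ (2*j) \<le> width * (N+1) ^ (2*j)"
    using \<eta> \<zeta> N1 by (intro mult_mono power_mono) auto
  then have small: "\<eta> * (\<xi> - \<eta>) ^ (2*j) \<le> 1" using width_small by linarith
  define R where "R = Re (\<omega> * exp (\<i> * complex_of_real \<theta>) * symbol a j \<eta> (\<xi> - \<eta>))"
  have "cmod (a 0 K) * N ^ K / 4 \<le> R"
    unfolding R_def \<omega>_def using KJ j1 top aK \<eta>0 \<zeta>(1) N1 small N_large resonance_phase_le_one[OF t \<eta> \<xi>]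
    by (intro Re_rotated_symbol_ge) (auto simp: \<theta>_def)
  then have "cmod (a 0 K) * N ^ K / 4 / (2 * pi) \<le> R / (2 * pi)"
    by (intro divide_right_mono) auto
  then show ?thesis unfolding Re_eq R_def[symmetric] coherent_level_def by simp
qed

text \<open>The kernel is bounded on the support of the low bump, uniformly in time (only the
  continuous symbol contributes to its modulus).\<close>
lemma kernel_bounded: "\<exists>B. \<forall>t'. \<forall>\<eta>\<in>{0..width}. cmod (kernel t' \<xi> \<eta>) \<le> B"
proof -
  have "continuous_on {0..width} (\<lambda>\<eta>. symbol a j \<eta> (\<xi> - \<eta>))"
    unfolding symbol_def by (intro continuous_intros)
  then have "bounded ((\<lambda>\<eta>. symbol a j \<eta> (\<xi> - \<eta>)) ` {0..width})"
    by (intro compact_imp_bounded compact_continuous_image) auto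
  then obtain B where B: "\<forall>\<eta>\<in>{0..width}. cmod (symbol a j \<eta> (\<xi> - \<eta>)) \<le> B"
    unfolding bounded_iff by auto
  have "cmod (kernel t' \<xi> \<eta>) = cmod (symbol a j \<eta> (\<xi> - \<eta>)) / (2 * pi)" for t' \<eta>
    by (simp add: kernel_def norm_mult norm_divide norm_disp)
  then show ?thesis using B by (intro exI[of _ "B / (2 * pi)"]) (auto intro: divide_right_mono)
qed

lemma integrand_Re_ge:
  assumes t: "t' \<in> {0..T}" and \<xi>: "\<xi> \<in> {N+width..N+1}"
  shows "width * coherent_level \<le> Re (rotation \<xi> * integrand \<xi> t')"
  using Re_integral_indicator_ge[OF _ kernel_integrable kernel_Re_ge[OF t \<xi>]] width_pos
  unfolding integrand_eq[OF t \<xi>] by simp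

lemma integrand_integrable:
  assumes \<xi>: "\<xi> \<in> {N+width..N+1}"
  shows "integrable lborel (\<lambda>t'. indicator {0..T} t' *\<^sub>R integrand \<xi> t')"
proof -
  obtain B where B: "\<forall>t'. \<forall>\<eta>\<in>{0..width}. cmod (kernel t' \<xi> \<eta>) \<le> B"
    using kernel_bounded by blast
  show ?thesis
  proof (rule integrableI_bounded_set_indicator[where B="width * B"])
    show "integrand \<xi> \<in> borel_measurable lborel"
      unfolding integrand_def nonlin_hat_def free_evol_def disp_def low_bump_def high_bump_def
      by measurable
    show "emeasure lborel {0..T} < \<infinity>"
      using emeasure_compact_finite[OF compact_Icc[of 0 T]] by simp
    show "AE t' in lborel. t' \<in> {0..T} \<longrightarrow> norm (integrand \<xi> t') \<le> width * B"
      using norm_integral_indicator_le[OF _ kernel_integrable] B width_pos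
      by (auto simp: integrand_eq[OF _ \<xi>])
  qed simp
qed

lemma test_duhamel_ge:
  assumes \<xi>: "\<xi> \<in> {N+width..N+1}"
  shows "T * (width * coherent_level) \<le> cmod (test_duhamel T \<xi>)"
proof -
  have "test_duhamel T \<xi> = (\<integral>t'. indicator {0..T} t' *\<^sub>R integrand \<xi> t' \<partial>lborel)"
    using T0 unfolding test_duhamel_def duhamel_def integrand_def
    by (simp add: interval_integral_Icc set_lebesgue_integral_def)
  then have "(T - 0) * (width * coherent_level) \<le> Re (rotation \<xi> * test_duhamel T \<xi>)"
    using Re_integral_indicator_ge[OF _ integrand_integrable[OF \<xi>] integrand_Re_ge[OF _ \<xi>]] T0
    by simp
  also have "\<dots> \<le> cmod (test_duhamel T \<xi>)"
    using complex_Re_le_cmod[of "rotation \<xi> * test_duhamel T \<xi>"] by (simp add: norm_mult norm_rotation)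
  finally show ?thesis by simp
qed

lemma test_duhamel_Hs_ge:
  assumes "in_Hs s (test_duhamel T)"
  shows "(1 - width) * ((1 + N\<^sup>2) powr s * 4 powr (-\<bar>s\<bar>) * (T * (width * coherent_level))\<^sup>2)
    \<le> (Hs_norm s (test_duhamel T))\<^sup>2"
proof -
  have "0 \<le> coherent_level" using N1 by (simp add: coherent_level_def)
  then have "0 \<le> T * (width * coherent_level)" using T0 width_pos by simp
  then show ?thesis
    using Hs_norm_sq_ge_on_interval[OF assms, of N "N + width" "N + 1"] test_duhamel_ge N1 width_pos width_le
    by simp
qed

lemma low_bump_Hs: "in_Hs s (low_bump width)" "(Hs_norm s (low_bump width))\<^sup>2 \<le> width * 4 powr \<bar>s\<bar>"
  using Hs_indicator[of 0 width s] width_pos width_le by (auto simp: low_bump_def[abs_def])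

lemma high_bump_Hs: "in_Hs s (high_bump N)" "(Hs_norm s (high_bump N))\<^sup>2 \<le> (1 + N\<^sup>2) powr s * 4 powr \<bar>s\<bar>"
  using Hs_indicator[of N "N + 1" s] N1 by (auto simp: high_bump_def[abs_def])

text \<open>The gain that breaks the bilinear estimate: since $K \ge j+1$,
  $\delta L^2 \sim N^{2K-2j} \gtrsim N^2$, with constants independent of $N$.\<close>lemma width_coherent_level_ge:
  "(cmod (a 0 K))\<^sup>2 * N\<^sup>2 / (64 * pi\<^sup>2 * (T * (2*j+2) + 1) * 4 ^ j) \<le> width * coherent_level\<^sup>2"
proof -
  define E where "E = T * (2*j+2) + 1"
  have E: "1 \<le> E" using T0 by (simp add: E_def)
  have "(N+1)^(2*j) \<le> (2*N)^(2*j)" using N1 by (intro power_mono) auto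
  also have "\<dots> = 4 ^ j * N ^ (2*j)" by (simp add: power_mult_distrib power_mult)
  finally have b1: "(N+1)^(2*j) \<le> 4 ^ j * N ^ (2*j)" .
  have "N ^ (2*j) * N\<^sup>2 = N ^ (2*j+2)" by (simp only: power_add)
  also have "\<dots> \<le> N ^ (2*K)" using N1 KJ by (intro power_increasing) auto
  finally have b2: "N ^ (2*j) * N\<^sup>2 \<le> N ^ (2*K)" .
  have "(cmod (a 0 K))\<^sup>2 * N\<^sup>2 / (64 * pi\<^sup>2 * E * 4 ^ j)
      = (cmod (a 0 K))\<^sup>2 * (N ^ (2*j) * N\<^sup>2) / (64 * pi\<^sup>2 * E * (4 ^ j * N ^ (2*j)))"
    using N1 by (simp add: field_simps)
  also have "\<dots> \<le> (cmod (a 0 K))\<^sup>2 * N ^ (2*K) / (64 * pi\<^sup>2 * E * (N+1)^(2*j))"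
    using b1 b2 E N1 by (intro frac_le mult_left_mono) auto
  also have "\<dots> = width * coherent_level\<^sup>2"
    unfolding width_def coherent_level_def E_def
    by (simp add: power2_eq_square power_mult power_mult_distrib field_simps)
  finally show ?thesis unfolding E_def .
qed

lemma test_estimate:
  assumes D: "in_Hs s (test_duhamel T)"
    and bound: "Hs_norm s (test_duhamel T) \<le> M * Hs_norm s (low_bump width) * Hs_norm s (high_bump N)"
  shows "growth_const j T (cmod (a 0 K)) * N\<^sup>2 \<le> M\<^sup>2 * (4 powr \<bar>s\<bar>) ^ 3"
proof -
  define W where "W = (1 + N\<^sup>2) powr s"
  define P where "P = (4::real) powr \<bar>s\<bar>"
  have "0 < 1 + N\<^sup>2" using zero_le_power2[of N] by linarith
  then have W: "W > 0" by (simp add: W_def)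
  have P: "P > 0" by (simp add: P_def)
  have "(Hs_norm s (test_duhamel T))\<^sup>2 \<le> (M * Hs_norm s (low_bump width) * Hs_norm s (high_bump N))\<^sup>2"
    using bound Hs_norm_nonneg by (intro power_mono) auto
  also have "\<dots> = M\<^sup>2 * ((Hs_norm s (low_bump width))\<^sup>2 * (Hs_norm s (high_bump N))\<^sup>2)"
    by (simp add: power_mult_distrib)
  also have "\<dots> \<le> M\<^sup>2 * ((width * P) * (W * P))"
    using low_bump_Hs(2) high_bump_Hs(2) width_pos P unfolding W_def P_def
    by (intro mult_left_mono mult_mono) auto
  finally have upper: "(Hs_norm s (test_duhamel T))\<^sup>2 \<le> (W * width / P) * (M\<^sup>2 * P ^ 3)"
    using P by (simp add: power2_eq_square power3_eq_cube field_simps)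
  define X where "X = W * (1 / P) * (T * (width * coherent_level))\<^sup>2"
  have "(W * width / P) * ((3/4) * T\<^sup>2 * (width * coherent_level\<^sup>2)) = (3/4) * X"
    by (simp add: X_def power2_eq_square field_simps)
  also have "\<dots> \<le> (1 - width) * X"
    using width_le W P by (intro mult_right_mono) (auto simp: X_def)
  also have "\<dots> \<le> (Hs_norm s (test_duhamel T))\<^sup>2"
    using test_duhamel_Hs_ge[OF D] by (simp add: X_def W_def P_def powr_minus_divide)
  finally have "(W * width / P) * ((3/4) * T\<^sup>2 * (width * coherent_level\<^sup>2)) \<le> (W * width / P) * (M\<^sup>2 * P ^ 3)"
    using upper by linarith
  then have "(3/4) * T\<^sup>2 * (width * coherent_level\<^sup>2) \<le> M\<^sup>2 * P ^ 3"
    by (rule mult_left_le_imp_le) (use W P width_pos in simp)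
  moreover have "growth_const j T (cmod (a 0 K)) * N\<^sup>2
      = (3/4) * T\<^sup>2 * ((cmod (a 0 K))\<^sup>2 * N\<^sup>2 / (64 * pi\<^sup>2 * (T * (2*j+2) + 1) * 4 ^ j))"
    unfolding growth_const_def by (simp add: field_simps)
  moreover have "\<dots> \<le> (3/4) * T\<^sup>2 * (width * coherent_level\<^sup>2)"
    using width_coherent_level_ge by (intro mult_left_mono) auto
  ultimately have "growth_const j T (cmod (a 0 K)) * N\<^sup>2 \<le> M\<^sup>2 * P ^ 3" by linarith
  then show ?thesis by (simp add: P_def)
qed

lemma bilinear_bound_bounds_frequency:
  assumes "\<And>g1 g2. in_Hs s g1 \<Longrightarrow> in_Hs s g2 \<Longrightarrow>
      in_Hs s (duhamel j T a (free_evol j T g1) (free_evol j T g2) T) \<and>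
      Hs_norm s (duhamel j T a (free_evol j T g1) (free_evol j T g2) T) \<le> M * Hs_norm s g1 * Hs_norm s g2"
  shows "growth_const j T (cmod (a 0 K)) * N\<^sup>2 \<le> M\<^sup>2 * (4 powr \<bar>s\<bar>) ^ 3"
proof (rule test_estimate)
  show "in_Hs s (test_duhamel T)"
    and "Hs_norm s (test_duhamel T) \<le> M * Hs_norm s (low_bump width) * Hs_norm s (high_bump N)"
    using assms[OF low_bump_Hs(1) high_bump_Hs(1)] unfolding test_duhamel_def by blast+
qed

end

lemma no_bilinear_bound:
  assumes j1: "1 \<le> j" and T0: "0 < T" and KJ: "j < K" "K \<le> 2*j" and aK: "a 0 K \<noteq> 0"
    and top: "\<forall>l2. K < l2 \<and> l2 \<le> 2*j \<longrightarrow> a 0 l2 = 0"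
  shows "\<not> (\<forall>g1 g2. in_Hs s g1 \<longrightarrow> in_Hs s g2 \<longrightarrow>
      in_Hs s (duhamel j T a (free_evol j T g1) (free_evol j T g2) T) \<and>
      Hs_norm s (duhamel j T a (free_evol j T g1) (free_evol j T g2) T) \<le> M * Hs_norm s g1 * Hs_norm s g2)"
proof
  assume bound: "\<forall>g1 g2. in_Hs s g1 \<longrightarrow> in_Hs s g2 \<longrightarrow>
      in_Hs s (duhamel j T a (free_evol j T g1) (free_evol j T g2) T) \<and>
      Hs_norm s (duhamel j T a (free_evol j T g1) (free_evol j T g2) T) \<le> M * Hs_norm s g1 * Hs_norm s g2"
  define \<kappa> where "\<kappa> = growth_const j T (cmod (a 0 K))"
  define Q where "Q = M\<^sup>2 * (4 powr \<bar>s\<bar>) ^ 3"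
  define N where "N = max (max 1 (4 * coeff_mass a j / cmod (a 0 K))) (Q / \<kappa> + 1)"
  have \<kappa>: "0 < \<kappa>" using growth_const_pos T0 aK by (simp add: \<kappa>_def)
  have N1: "1 \<le> N" and NQ: "Q / \<kappa> < N" by (auto simp: N_def)
  have "4 * coeff_mass a j / cmod (a 0 K) \<le> N" by (simp add: N_def)
  then have N_large: "4 * coeff_mass a j \<le> cmod (a 0 K) * N"
    using aK by (simp add: pos_divide_le_eq mult.commute)
  have "\<kappa> * N\<^sup>2 \<le> Q"
    unfolding \<kappa>_def Q_def
    by (rule bilinear_bound_bounds_frequency[OF j1 T0 KJ aK top N1 N_large]) (use bound in blast)
  moreover have "Q < \<kappa> * N" using NQ \<kappa> by (simp add: pos_divide_less_eq mult.commute)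
  moreover have "\<kappa> * N \<le> \<kappa> * N\<^sup>2" using N1 \<kappa> by (simp add: power2_eq_square)
  ultimately show False by linarith
qed

theorem theorem3:
  fixes j :: nat and s T :: real and a :: "nat \<Rightarrow> nat \<Rightarrow> complex"
  assumes "j \<ge> 1" and "T > 0"
    and "\<exists>k. j < k \<and> k \<le> 2 * j \<and> a 0 k \<noteq> 0"
  shows "\<not> (\<exists>X N. seminormed_fun_space X N \<and>
     (\<exists>C1. \<forall>u\<in>X. in_C_Hs s T u \<and> C_Hs_norm s T u \<le> C1 * N u) \<and>
     (\<exists>C2. \<forall>g. in_Hs s g \<longrightarrow>
          free_evol j T g \<in> X \<and> N (free_evol j T g) \<le> C2 * Hs_norm s g) \<and>
     (\<exists>C3. \<forall>u\<in>X. \<forall>v\<in>X.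
          duhamel j T a u v \<in> X \<and> N (duhamel j T a u v) \<le> C3 * N u * N v))"
proof
  assume "\<exists>X N. seminormed_fun_space X N \<and>
     (\<exists>C1. \<forall>u\<in>X. in_C_Hs s T u \<and> C_Hs_norm s T u \<le> C1 * N u) \<and>
     (\<exists>C2. \<forall>g. in_Hs s g \<longrightarrow>
          free_evol j T g \<in> X \<and> N (free_evol j T g) \<le> C2 * Hs_norm s g) \<and>
     (\<exists>C3. \<forall>u\<in>X. \<forall>v\<in>X.
          duhamel j T a u v \<in> X \<and> N (duhamel j T a u v) \<le> C3 * N u * N v)"
  then obtain X Nm C1 C2 C3 where X: "seminormed_fun_space X Nm"
    and c1: "\<forall>u\<in>X. in_C_Hs s T u \<and> C_Hs_norm s T u \<le> C1 * Nm u"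
    and c2: "\<forall>g. in_Hs s g \<longrightarrow> free_evol j T g \<in> X \<and> Nm (free_evol j T g) \<le> C2 * Hs_norm s g"
    and c3: "\<forall>u\<in>X. \<forall>v\<in>X. duhamel j T a u v \<in> X \<and> Nm (duhamel j T a u v) \<le> C3 * Nm u * Nm v"
    by blast
  obtain K where K: "j < K" "K \<le> 2*j" "a 0 K \<noteq> 0" and top: "\<forall>l2. K < l2 \<and> l2 \<le> 2*j \<longrightarrow> a 0 l2 = 0"
    using leading_index[of j a] assms(3) by blast
  have "\<forall>g1 g2. in_Hs s g1 \<longrightarrow> in_Hs s g2 \<longrightarrow>
      in_Hs s (duhamel j T a (free_evol j T g1) (free_evol j T g2) T) \<and>
      Hs_norm s (duhamel j T a (free_evol j T g1) (free_evol j T g2) T)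
        \<le> (max C1 0 * max C3 0 * (max C2 0)\<^sup>2) * Hs_norm s g1 * Hs_norm s g2"
    using duhamel_bilinear_bound[OF assms(2) X c1 c2 c3] by blast
  then show False
    using no_bilinear_bound[where j=j and T=T and K=K and a=a and s=s
        and M="max C1 0 * max C3 0 * (max C2 0)\<^sup>2"] assms(1,2) K top
    by blast
qed

end
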